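(* Let $B$ be a flat bouquet of $n$-circles surface, consisting of a disc $\mathcal{D}$ and $n$ flat bands each attached at both of its ends to $\partial\mathcal{D}$. Then there is a finite sequence of band slides transforming $B$ into a flat bouquet of $n$-circles surface $\mathcal{F}$ (with the same boundary link type) together with a choice of base point $P \in \partial\mathcal{D}$ such that, with respect to the labeling determined by $P$, every element of $L(\mathcal{F})$ has the form $\{i,\overline{j}\}$ with $i,j \in \{1,\dots,n\}$; that is, every band of $\mathcal{F}$ joins an interval labeled by an element of $\{1,\dots,n\}$ to an interval labeled by an element of $\{\overline{1},\dots,\overline{n}\}$.
   Context: A flat bouquet of $n$-circles surface is a compact oriented surface in $\mathbb{S}^3$ obtained as a thickening of a spatial embedding of the bouquet of $n$ circles (one vertex, $n$ loops) with zero voltage on every edge: a disc $\mathcal{D}$ in the plane of a diagram with $n$ bands attached to $\partial\mathcal{D}$ at $2n$ disjoint intervals, each band lying flat in the blackboard framing (no twists, equivalently framing $0$), bands possibly linked with one another but not knotted. Given a point $P \in \partial\mathcal{D}$ not in any attaching interval, label the $2n$ attaching intervals clockwise starting from $P$ by $1,2,\dots,n,\overline{1},\overline{2},\dots,\overline{n}$; changing $P$ is called relabeling. Each band joins two intervals and is recorded by the $2$-element set of their labels; $L(\mathcal{F})$ denotes the set of these $n$ two-element sets. A band slide moves one end of a band along (parallel to) another band across the disc; it is an isotopy of the surface and preserves the isotopy type of the boundary link. *)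

theory Defs
  imports Main "HOL-Library.Multiset"
begin

text \<open>The 2n attaching intervals on the boundary of the disc, read clockwise starting
  just after a base point P, are recorded as a list w of length 2n; the entry w!i
  is the name (in {0..<n}) of the band attached at the i-th interval.  Position i < n carries the label i+1, position
  n+i carries the label (i+1)-bar.\<close>

definition bouquet_word :: "nat \<Rightarrow> nat list \<Rightarrow> bool" where
  "bouquet_word n w \<longleftrightarrow> length w = 2 * n \<and> (\<forall>x \<in> set w. x < n)
      \<and> (\<forall>a < n. count (mset w) a = 2)"

text \<open>Relabeling: changing the base point P rotates the clockwise word.\<close>
definition relabel :: "nat list \<Rightarrow> nat list \<Rightarrow> bool" where
  "relabel w w' \<longleftrightarrow> (\<exists>k. w' = rotate k w)"

text \<open>Band slide (for untwisted, orientable bands): the end of band a sitting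
  immediately counterclockwise of an end of a different band b is slid along b;
  it arrives immediately clockwise of the other end of b.  Using relabeling we
  may assume the two adjacent ends are at the start of the word.\<close>
definition band_slide :: "nat list \<Rightarrow> nat list \<Rightarrow> bool" where
  "band_slide w w' \<longleftrightarrow> (\<exists>a b v1 v2. a \<noteq> b \<and> b \<notin> set v1 \<and>
      w = [a, b] @ v1 @ [b] @ v2 \<and> w' = [b] @ v1 @ [b, a] @ v2)"

text \<open>One move: a band slide, its inverse (band slides are reversible), or a relabeling.\<close>
definition bouquet_move :: "nat list \<Rightarrow> nat list \<Rightarrow> bool" where
  "bouquet_move w w' \<longleftrightarrow> band_slide w w' \<or> band_slide w' w \<or> relabel w w'"

definition bands_split :: "nat \<Rightarrow> nat list \<Rightarrow> bool" where
  "bands_split n w \<longleftrightarrow> (\<forall>a < n. count (mset (take n w)) a = 1 \<and> count (mset (drop n w)) a = 1)"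

end

theory Submission
  imports Defs
begin

text \<open>Every band occupies two intervals, so it suffices to reach a word whose first n letters
  are distinct.  The prefix is grown one letter at a time: take the first letter y after the
  prefix that does not occur in it, and move the first occurrence of y forward past the letters
  in between.  A single band slide from [a, b] @ v1 @ [b] to [b] @ v1 @ [b, a], conjugated
  by relabelings, advances the first end of b by one step while fixing everything in front of
  it; repeating it carries y up to the prefix.\<close>

lemma mset_rotate: "mset (rotate k xs) = mset xs"
  by (metis append_take_drop_id mset_append union_commute rotate_drop_take)

lemma bouquet_move_mset: "bouquet_move w w' \<Longrightarrow> mset w' = mset w"
  unfolding bouquet_move_def band_slide_def relabel_def
  by (auto simp: mset_rotate)

lemma bouquet_moves_mset: "bouquet_move\<^sup>*\<^sup>* w w' \<Longrightarrow> mset w' = mset w"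
  by (induction rule: rtranclp_induct) (auto dest: bouquet_move_mset)

lemma bouquet_word_mset_eq: "mset w' = mset w \<Longrightarrow> bouquet_word n w \<Longrightarrow> bouquet_word n w'"
  unfolding bouquet_word_def by (metis set_mset_mset size_mset)

lemma bouquet_move_rotate: "bouquet_move w (rotate k w)"
  unfolding bouquet_move_def relabel_def by blast

lemma bouquet_moves_band_slide:
  assumes "a \<noteq> b" "b \<notin> set v1"
  shows "bouquet_move\<^sup>*\<^sup>* (s @ [a, b] @ v1 @ [b] @ v2) (s @ [b] @ v1 @ [b, a] @ v2)"
proof -
  have "bouquet_move (s @ [a, b] @ v1 @ [b] @ v2) ([a, b] @ v1 @ [b] @ (v2 @ s))"
    using bouquet_move_rotate[of "s @ [a, b] @ v1 @ [b] @ v2" "length s"]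
    by (simp add: rotate_append)
  moreover have "bouquet_move ([a, b] @ v1 @ [b] @ (v2 @ s)) ([b] @ v1 @ [b, a] @ (v2 @ s))"
    unfolding bouquet_move_def band_slide_def using assms by blast
  moreover have "bouquet_move (([b] @ v1 @ [b, a] @ v2) @ s) (s @ [b] @ v1 @ [b, a] @ v2)"
    using bouquet_move_rotate[of "([b] @ v1 @ [b, a] @ v2) @ s" "length ([b] @ v1 @ [b, a] @ v2)"]
    by (simp only: rotate_append)
  ultimately show ?thesis
    by (simp add: converse_rtranclp_into_rtranclp)
qed

lemma bouquet_moves_pull_forward:
  assumes "y \<notin> set q" "y \<in> set v"
  shows "\<exists>v'. bouquet_move\<^sup>*\<^sup>* (s @ q @ [y] @ v) (s @ [y] @ v')"
  using assms
proof (induction q arbitrary: v rule: rev_induct)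
  case Nil
  then show ?case by auto
next
  case (snoc u q)
  from snoc.prems(2) obtain v1 v2 where v: "v = v1 @ [y] @ v2" "y \<notin> set v1"
    using split_list_first by fastforce
  have "u \<noteq> y" using snoc.prems(1) by auto
  from bouquet_moves_band_slide[OF this v(2), of "s @ q" v2]
  have slide: "bouquet_move\<^sup>*\<^sup>* (s @ (q @ [u]) @ [y] @ v) (s @ q @ [y] @ (v1 @ [y, u] @ v2))"
    using v by simp
  obtain v' where "bouquet_move\<^sup>*\<^sup>* (s @ q @ [y] @ (v1 @ [y, u] @ v2)) (s @ [y] @ v')"
    using snoc.IH[of "v1 @ [y, u] @ v2"] snoc.prems(1) by auto
  with slide show ?case
    by (meson rtranclp_trans)
qed

lemma bouquet_word_fresh_letter_after_prefix:
  assumes w: "bouquet_word n (p @ r)" and "distinct p" "length p < n"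
  shows "\<exists>q y v. r = q @ [y] @ v \<and> set q \<subseteq> set p \<and> y \<notin> set p \<and> y \<in> set v"
proof -
  have cnt: "count (mset (p @ r)) a = 2" if "a < n" for a
    using w that unfolding bouquet_word_def by blast
  have "card (set p) < card {0..<n}"
    using assms(2,3) by (simp add: distinct_card)
  then have "\<not> {0..<n} \<subseteq> set p"
    by (meson card_mono finite_set leD)
  then obtain z where z: "z < n" "z \<notin> set p"
    by (meson atLeastLessThan_iff subsetI zero_le)
  have "count (mset p) z = 0"
    using z(2) by (simp add: count_mset_0_iff)
  moreover have "count (mset p) z + count (mset r) z = 2"
    using cnt[OF z(1)] by simp
  ultimately have "count (mset r) z = 2"
    by linarith
  then have "\<exists>x \<in> set r. x \<notin> set p"
    using z(2) by (metis count_mset_0_iff zero_neq_numeral)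
  then obtain q y v where r: "r = q @ y # v" and y: "y \<notin> set p"
    and q: "\<forall>x \<in> set q. \<not> x \<notin> set p"
    by (rule split_list_first_propE)
  have "y < n" using w r unfolding bouquet_word_def by auto
  then have "count (mset p) y + count (mset q) y + 1 + count (mset v) y = 2"
    using cnt[of y] r by simp
  moreover have "count (mset p) y = 0" "count (mset q) y = 0"
    using q y by (auto simp: count_mset_0_iff)
  ultimately have "count (mset v) y = 1"
    by linarith
  then have "y \<in> set v" by (metis count_mset_0_iff zero_neq_one)
  with r q y show ?thesis by auto
qed

lemma bouquet_moves_distinct_prefix:
  assumes "bouquet_word n w" "k \<le> n"
  shows "\<exists>w'. bouquet_move\<^sup>*\<^sup>* w w' \<and> distinct (take k w')"
  using assms(2)
proof (induction k)
  case 0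
  then show ?case by auto
next
  case (Suc k)
  then obtain w' where moves: "bouquet_move\<^sup>*\<^sup>* w w'" and d: "distinct (take k w')"
    by auto
  have w': "bouquet_word n w'"
    using bouquet_word_mset_eq[OF bouquet_moves_mset[OF moves] assms(1)] .
  define p where "p = take k w'"
  have lp: "length p = k"
    using Suc.prems w' unfolding p_def bouquet_word_def by simp
  obtain q y v where split: "drop k w' = q @ [y] @ v" and "set q \<subseteq> set p"
    and yp: "y \<notin> set p" and "y \<in> set v"
    using bouquet_word_fresh_letter_after_prefix[of n p "drop k w'"] w' d Suc.prems lp
    unfolding p_def by auto
  then have "y \<notin> set q" by blast
  then obtain v' where "bouquet_move\<^sup>*\<^sup>* (p @ q @ [y] @ v) (p @ [y] @ v')"
    using bouquet_moves_pull_forward \<open>y \<in> set v\<close> by blast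
  moreover have "w' = p @ q @ [y] @ v"
    using split unfolding p_def by (metis append_take_drop_id)
  ultimately have "bouquet_move\<^sup>*\<^sup>* w (p @ [y] @ v')"
    using moves by (metis rtranclp_trans)
  moreover have "distinct (take (Suc k) (p @ [y] @ v'))"
    using lp d yp unfolding p_def by simp
  ultimately show ?case by blast
qed

lemma bands_split_if_distinct_take:
  assumes w: "bouquet_word n w" and d: "distinct (take n w)"
  shows "bands_split n w"
  unfolding bands_split_def
proof (intro allI impI conjI)
  fix a assume a: "a < n"
  have "set (take n w) \<subseteq> {0..<n}"
    using w unfolding bouquet_word_def by (auto dest: in_set_takeD)
  moreover have "card (set (take n w)) = card {0..<n}"
    using w d unfolding bouquet_word_def by (simp add: distinct_card)
  ultimately have "set (take n w) = {0..<n}"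
    by (simp add: card_subset_eq)
  with d a show first: "count (mset (take n w)) a = 1"
    by (simp add: distinct_count_atmost_1)
  have "count (mset (take n w) + mset (drop n w)) a = 2"
    using w a unfolding bouquet_word_def by (metis append_take_drop_id mset_append)
  with first show "count (mset (drop n w)) a = 1" by simp
qed

theorem mainTheorem3:
  fixes n :: nat and w :: "nat list"
  assumes "bouquet_word n w"
  shows "\<exists>w'. bouquet_move\<^sup>*\<^sup>* w w' \<and> bouquet_word n w' \<and> bands_split n w'"
proof -
  obtain w' where moves: "bouquet_move\<^sup>*\<^sup>* w w'" and d: "distinct (take n w')"
    using bouquet_moves_distinct_prefix[OF assms order_refl] by blast
  have "bouquet_word n w'"
    using bouquet_word_mset_eq[OF bouquet_moves_mset[OF moves] assms] .
  with moves d show ?thesis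
    using bands_split_if_distinct_take by blast
qed

end
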